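(* Let $0\to K_i\to L_i\to M_i\to 0$ be a family of admissible short exact sequences in an exact category $\mathsf K$. Assume that the products $\prod_iK_i$, $\prod_iL_i$, $\prod_iM_i$ exist in $\mathsf K$, and that there exists an admissible epimorphism $q\colon A\to\prod_iM_i$ where $A\in\mathsf K$ satisfies $\mathrm{Ext}^1_{\mathsf K}(A,K_i)=0$ for all $i$. Then $0\to\prod_iK_i\to\prod_iL_i\to\prod_iM_i\to0$ (with the induced morphisms) is an admissible short exact sequence in $\mathsf K$.
   Context: $\mathsf K$ is an exact category in Quillen's sense and $\mathrm{Ext}^1_{\mathsf K}$ denotes Yoneda Ext in $\mathsf K$. Products are not assumed to be exact. *)

theory Defs
  imports Main
begin

text \<open>Categories with untyped morphisms: a morphism f is an arrow A -> B when
  f is in Hom A B.  cmp g f is the composite "g after f".\<close>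

record ('o, 'm) acat =
  Ob  :: "'o set"
  Hom :: "'o \<Rightarrow> 'o \<Rightarrow> 'm set"
  cmp :: "'m \<Rightarrow> 'm \<Rightarrow> 'm"
  idm :: "'o \<Rightarrow> 'm"
  add :: "'m \<Rightarrow> 'm \<Rightarrow> 'm"
  zer :: "'o \<Rightarrow> 'o \<Rightarrow> 'm"

definition preadditive :: "('o, 'm, 'x) acat_scheme \<Rightarrow> bool" where
  "preadditive C \<longleftrightarrow>
     (\<forall>A B. Hom C A B \<noteq> {} \<longrightarrow> A \<in> Ob C \<and> B \<in> Ob C) \<and>
     (\<forall>A\<in>Ob C. idm C A \<in> Hom C A A) \<and>
     (\<forall>A B D f g. f \<in> Hom C A B \<and> g \<in> Hom C B D \<longrightarrow> cmp C g f \<in> Hom C A D) \<and>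
     (\<forall>A B f. f \<in> Hom C A B \<longrightarrow> cmp C (idm C B) f = f \<and> cmp C f (idm C A) = f) \<and>
     (\<forall>A B D E f g h. f \<in> Hom C A B \<and> g \<in> Hom C B D \<and> h \<in> Hom C D E \<longrightarrow>
        cmp C h (cmp C g f) = cmp C (cmp C h g) f) \<and>
     (\<forall>A\<in>Ob C. \<forall>B\<in>Ob C. zer C A B \<in> Hom C A B) \<and>
     (\<forall>A B f g. f \<in> Hom C A B \<and> g \<in> Hom C A B \<longrightarrow> add C f g \<in> Hom C A B) \<and>
     (\<forall>A B f g h. f \<in> Hom C A B \<and> g \<in> Hom C A B \<and> h \<in> Hom C A B \<longrightarrow>
        add C (add C f g) h = add C f (add C g h)) \<and>
     (\<forall>A B f g. f \<in> Hom C A B \<and> g \<in> Hom C A B \<longrightarrow> add C f g = add C g f) \<and>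
     (\<forall>A B f. f \<in> Hom C A B \<longrightarrow> add C f (zer C A B) = f) \<and>
     (\<forall>A B f. f \<in> Hom C A B \<longrightarrow> (\<exists>g\<in>Hom C A B. add C f g = zer C A B)) \<and>
     (\<forall>A B D f g h. f \<in> Hom C A B \<and> g \<in> Hom C A B \<and> h \<in> Hom C B D \<longrightarrow>
        cmp C h (add C f g) = add C (cmp C h f) (cmp C h g)) \<and>
     (\<forall>A B D f g h. f \<in> Hom C B D \<and> g \<in> Hom C B D \<and> h \<in> Hom C A B \<longrightarrow>
        cmp C (add C f g) h = add C (cmp C f h) (cmp C g h))"

definition additive :: "('o, 'm, 'x) acat_scheme \<Rightarrow> bool" where
  "additive C \<longleftrightarrow> preadditive C \<and>
     (\<exists>Z\<in>Ob C. \<forall>A\<in>Ob C. Hom C Z A = {zer C Z A} \<and> Hom C A Z = {zer C A Z}) \<and>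
     (\<forall>A\<in>Ob C. \<forall>B\<in>Ob C. \<exists>S\<in>Ob C. \<exists>i1 i2 p1 p2.
        i1 \<in> Hom C A S \<and> i2 \<in> Hom C B S \<and> p1 \<in> Hom C S A \<and> p2 \<in> Hom C S B \<and>
        cmp C p1 i1 = idm C A \<and> cmp C p2 i2 = idm C B \<and>
        cmp C p1 i2 = zer C B A \<and> cmp C p2 i1 = zer C A B \<and>
        add C (cmp C i1 p1) (cmp C i2 p2) = idm C S)"

definition is_iso :: "('o, 'm, 'x) acat_scheme \<Rightarrow> 'o \<Rightarrow> 'o \<Rightarrow> 'm \<Rightarrow> bool" where
  "is_iso C A B f \<longleftrightarrow> f \<in> Hom C A B \<and>
     (\<exists>g\<in>Hom C B A. cmp C g f = idm C A \<and> cmp C f g = idm C B)"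

definition is_kernel :: "('o, 'm, 'x) acat_scheme \<Rightarrow> 'o \<Rightarrow> 'o \<Rightarrow> 'o \<Rightarrow> 'm \<Rightarrow> 'm \<Rightarrow> bool" where
  "is_kernel C A B D i p \<longleftrightarrow> i \<in> Hom C A B \<and> p \<in> Hom C B D \<and> cmp C p i = zer C A D \<and>
     (\<forall>X\<in>Ob C. \<forall>h\<in>Hom C X B. cmp C p h = zer C X D \<longrightarrow> (\<exists>!u. u \<in> Hom C X A \<and> cmp C i u = h))"

definition is_cokernel :: "('o, 'm, 'x) acat_scheme \<Rightarrow> 'o \<Rightarrow> 'o \<Rightarrow> 'o \<Rightarrow> 'm \<Rightarrow> 'm \<Rightarrow> bool" where
  "is_cokernel C A B D i p \<longleftrightarrow> i \<in> Hom C A B \<and> p \<in> Hom C B D \<and> cmp C p i = zer C A D \<and>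
     (\<forall>X\<in>Ob C. \<forall>h\<in>Hom C B X. cmp C h i = zer C A X \<longrightarrow> (\<exists>!u. u \<in> Hom C D X \<and> cmp C u p = h))"

definition kernel_cokernel_pair where
  "kernel_cokernel_pair C A B D i p \<longleftrightarrow> is_kernel C A B D i p \<and> is_cokernel C A B D i p"

definition is_pushout :: "('o, 'm, 'x) acat_scheme \<Rightarrow> 'o \<Rightarrow> 'o \<Rightarrow> 'o \<Rightarrow> 'o \<Rightarrow> 'm \<Rightarrow> 'm \<Rightarrow> 'm \<Rightarrow> 'm \<Rightarrow> bool" where
  "is_pushout C A B A' B' i f i' f' \<longleftrightarrow>
     i \<in> Hom C A B \<and> f \<in> Hom C A A' \<and> i' \<in> Hom C A' B' \<and> f' \<in> Hom C B B' \<and>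
     cmp C i' f = cmp C f' i \<and>
     (\<forall>X\<in>Ob C. \<forall>u\<in>Hom C A' X. \<forall>v\<in>Hom C B X. cmp C u f = cmp C v i \<longrightarrow>
        (\<exists>!w. w \<in> Hom C B' X \<and> cmp C w i' = u \<and> cmp C w f' = v))"

definition is_pullback :: "('o, 'm, 'x) acat_scheme \<Rightarrow> 'o \<Rightarrow> 'o \<Rightarrow> 'o \<Rightarrow> 'o \<Rightarrow> 'm \<Rightarrow> 'm \<Rightarrow> 'm \<Rightarrow> 'm \<Rightarrow> bool" where
  "is_pullback C B D D' B' p h p' h' \<longleftrightarrow>
     p \<in> Hom C B D \<and> h \<in> Hom C D' D \<and> p' \<in> Hom C B' D' \<and> h' \<in> Hom C B' B \<and>
     cmp C p h' = cmp C h p' \<and>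
     (\<forall>X\<in>Ob C. \<forall>u\<in>Hom C X D'. \<forall>v\<in>Hom C X B. cmp C h u = cmp C p v \<longrightarrow>
        (\<exists>!w. w \<in> Hom C X B' \<and> cmp C p' w = u \<and> cmp C h' w = v))"

text \<open>An exact structure is a class of conflations E A B D i p
  (meaning the sequence A --i--> B --p--> D).\<close>
type_synonym ('o, 'm) confl = "'o \<Rightarrow> 'o \<Rightarrow> 'o \<Rightarrow> 'm \<Rightarrow> 'm \<Rightarrow> bool"

definition adm_mono :: "('o, 'm) confl \<Rightarrow> 'o \<Rightarrow> 'o \<Rightarrow> 'm \<Rightarrow> bool" where
  "adm_mono E A B i \<longleftrightarrow> (\<exists>D p. E A B D i p)"

definition adm_epi :: "('o, 'm) confl \<Rightarrow> 'o \<Rightarrow> 'o \<Rightarrow> 'm \<Rightarrow> bool" where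
  "adm_epi E B D p \<longleftrightarrow> (\<exists>A i. E A B D i p)"

definition exact_category :: "('o, 'm, 'x) acat_scheme \<Rightarrow> ('o, 'm) confl \<Rightarrow> bool" where
  "exact_category C E \<longleftrightarrow> additive C \<and>
     (\<forall>A B D i p. E A B D i p \<longrightarrow>
        A \<in> Ob C \<and> B \<in> Ob C \<and> D \<in> Ob C \<and> kernel_cokernel_pair C A B D i p) \<and>
     (\<forall>A B D i p A' B' D' i' p' a b d.
        E A B D i p \<and> is_iso C A' A a \<and> is_iso C B' B b \<and> is_iso C D' D d \<and>
        i' \<in> Hom C A' B' \<and> p' \<in> Hom C B' D' \<and>
        cmp C b i' = cmp C i a \<and> cmp C d p' = cmp C p b \<longrightarrow> E A' B' D' i' p') \<and>
     (\<forall>A\<in>Ob C. adm_mono E A A (idm C A)) \<and>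
     (\<forall>A\<in>Ob C. adm_epi E A A (idm C A)) \<and>
     (\<forall>A B D f g. adm_mono E A B f \<and> adm_mono E B D g \<longrightarrow> adm_mono E A D (cmp C g f)) \<and>
     (\<forall>A B D f g. adm_epi E A B f \<and> adm_epi E B D g \<longrightarrow> adm_epi E A D (cmp C g f)) \<and>
     (\<forall>A B A' i f. adm_mono E A B i \<and> f \<in> Hom C A A' \<longrightarrow>
        (\<exists>B' i' f'. is_pushout C A B A' B' i f i' f' \<and> adm_mono E A' B' i')) \<and>
     (\<forall>B D D' p h. adm_epi E B D p \<and> h \<in> Hom C D' D \<longrightarrow>
        (\<exists>B' p' h'. is_pullback C B D D' B' p h p' h' \<and> adm_epi E B' D' p'))"

text \<open>Yoneda Ext^1(A, K): conflations K --> X --> A modulo the equivalence relation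
  generated by morphisms of extensions (phi : X -> Y with phi i = j and q phi = p).\<close>
definition yoneda_rel :: "('o, 'm, 'x) acat_scheme \<Rightarrow> ('o, 'm) confl \<Rightarrow> 'o \<Rightarrow> 'o \<Rightarrow>
    (('o \<times> 'm \<times> 'm) \<times> ('o \<times> 'm \<times> 'm)) set" where
  "yoneda_rel C E A K = {((X, i, p), (Y, j, q)). E K X A i p \<and> E K Y A j q \<and>
     (\<exists>\<phi>\<in>Hom C X Y. cmp C \<phi> i = j \<and> cmp C q \<phi> = p)}"

definition Ext1 :: "('o, 'm, 'x) acat_scheme \<Rightarrow> ('o, 'm) confl \<Rightarrow> 'o \<Rightarrow> 'o \<Rightarrow>
    ('o \<times> 'm \<times> 'm) set set" where
  "Ext1 C E A K = {(X, i, p). E K X A i p} //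
     ((yoneda_rel C E A K \<union> (yoneda_rel C E A K)\<inverse>)\<^sup>*)"

definition Ext1_zero where
  "Ext1_zero C E A K \<longleftrightarrow> is_singleton (Ext1 C E A K)"

definition is_product :: "('o, 'm, 'x) acat_scheme \<Rightarrow> 'i set \<Rightarrow> ('i \<Rightarrow> 'o) \<Rightarrow> 'o \<Rightarrow> ('i \<Rightarrow> 'm) \<Rightarrow> bool" where
  "is_product C I X P pr \<longleftrightarrow> P \<in> Ob C \<and> (\<forall>i\<in>I. pr i \<in> Hom C P (X i)) \<and>
     (\<forall>Y\<in>Ob C. \<forall>f. (\<forall>i\<in>I. f i \<in> Hom C Y (X i)) \<longrightarrow>
        (\<exists>!u. u \<in> Hom C Y P \<and> (\<forall>i\<in>I. cmp C (pr i) u = f i)))"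

end

theory Submission
  imports Defs
begin

text \<open>Products of kernels are kernels, so the induced map F is a kernel of G; and since
  Ext1(A, K_i) = 0, every component of q lifts along g_i, so q = G l for some l.
  It remains to see that a kernel F of a map G through which an admissible epimorphism
  q : A \<rightarrow> M factors is an admissible monomorphism with cokernel G (a form of Keller's
  obscure axiom). Push the conflation N \<rightarrow> A \<rightarrow> M of q out along the map N \<rightarrow> K through
  which l restricted to N factors; this gives a conflation K \<rightarrow> Y \<rightarrow> M together with a
  comparison map w : Y \<rightarrow> L. Then w is monic because F is, and pulling back along G
  produces a cover of L on which w has a preimage, so w is split epic, hence an isomorphism.\<close>

locale exact_cat =
  fixes C :: "('o, 'm, 'x) acat_scheme" and E :: "('o, 'm) confl"
  assumes exact: "exact_category C E"
begin

abbreviation hom where "hom \<equiv> Hom C"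
abbreviation compose (infixl "\<cdot>" 70) where "g \<cdot> f \<equiv> cmp C g f"
abbreviation plus_mor (infixl "\<oplus>" 65) where "f \<oplus> g \<equiv> add C f g"
abbreviation zero_mor ("\<zero>\<^bsub>_,_\<^esub>") where "\<zero>\<^bsub>A,B\<^esub> \<equiv> zer C A B"
abbreviation id_mor ("\<one>\<^bsub>_\<^esub>") where "\<one>\<^bsub>A\<^esub> \<equiv> idm C A"

lemma additive: "additive C"
  using exact unfolding exact_category_def by blast

lemma preadditive: "preadditive C"
  using additive unfolding additive_def by blast

lemma hom_ob: "f \<in> hom A B \<Longrightarrow> A \<in> Ob C \<and> B \<in> Ob C"
  using preadditive unfolding preadditive_def by (metis empty_iff)

lemma id_hom: "A \<in> Ob C \<Longrightarrow> \<one>\<^bsub>A\<^esub> \<in> hom A A"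
  using preadditive unfolding preadditive_def by simp

lemma cmp_hom: "f \<in> hom A B \<Longrightarrow> g \<in> hom B D \<Longrightarrow> g \<cdot> f \<in> hom A D"
  using preadditive unfolding preadditive_def by simp

lemma cmp_id_left: "f \<in> hom A B \<Longrightarrow> \<one>\<^bsub>B\<^esub> \<cdot> f = f"
  using preadditive unfolding preadditive_def by simp

lemma cmp_id_right: "f \<in> hom A B \<Longrightarrow> f \<cdot> \<one>\<^bsub>A\<^esub> = f"
  using preadditive unfolding preadditive_def by simp

lemma cmp_assoc:
  "f \<in> hom A B \<Longrightarrow> g \<in> hom B D \<Longrightarrow> h \<in> hom D F \<Longrightarrow> h \<cdot> (g \<cdot> f) = (h \<cdot> g) \<cdot> f"
  using preadditive unfolding preadditive_def by simp

lemma zer_hom: "A \<in> Ob C \<Longrightarrow> B \<in> Ob C \<Longrightarrow> \<zero>\<^bsub>A,B\<^esub> \<in> hom A B"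
  using preadditive unfolding preadditive_def by simp

lemma add_hom: "f \<in> hom A B \<Longrightarrow> g \<in> hom A B \<Longrightarrow> f \<oplus> g \<in> hom A B"
  using preadditive unfolding preadditive_def by simp

lemma mor_add_assoc:
  "f \<in> hom A B \<Longrightarrow> g \<in> hom A B \<Longrightarrow> h \<in> hom A B \<Longrightarrow> (f \<oplus> g) \<oplus> h = f \<oplus> (g \<oplus> h)"
  using preadditive unfolding preadditive_def by simp

lemma mor_add_commute: "f \<in> hom A B \<Longrightarrow> g \<in> hom A B \<Longrightarrow> f \<oplus> g = g \<oplus> f"
  using preadditive unfolding preadditive_def by simp

lemma mor_add_zero_right: "f \<in> hom A B \<Longrightarrow> f \<oplus> \<zero>\<^bsub>A,B\<^esub> = f"
  using preadditive unfolding preadditive_def by simp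

lemma mor_add_inverse: "f \<in> hom A B \<Longrightarrow> \<exists>g\<in>hom A B. f \<oplus> g = \<zero>\<^bsub>A,B\<^esub>"
  using preadditive unfolding preadditive_def by meson

lemma cmp_add_distrib_left:
  "f \<in> hom A B \<Longrightarrow> g \<in> hom A B \<Longrightarrow> h \<in> hom B D \<Longrightarrow> h \<cdot> (f \<oplus> g) = h \<cdot> f \<oplus> h \<cdot> g"
  using preadditive unfolding preadditive_def by simp

lemma cmp_add_distrib_right:
  "f \<in> hom B D \<Longrightarrow> g \<in> hom B D \<Longrightarrow> h \<in> hom A B \<Longrightarrow> (f \<oplus> g) \<cdot> h = f \<cdot> h \<oplus> g \<cdot> h"
  using preadditive unfolding preadditive_def by simp

lemma mor_add_zero_left: "f \<in> hom A B \<Longrightarrow> \<zero>\<^bsub>A,B\<^esub> \<oplus> f = f"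
  using hom_ob[of f A B] mor_add_commute[of f A B] mor_add_zero_right[of f A B] zer_hom[of A B] by simp

lemma zero_if_add_idem:
  assumes x: "x \<in> hom A B" and "x \<oplus> x = x"
  shows "x = \<zero>\<^bsub>A,B\<^esub>"
proof -
  obtain y where y: "y \<in> hom A B" "x \<oplus> y = \<zero>\<^bsub>A,B\<^esub>"
    using mor_add_inverse[OF x] by blast
  have "(x \<oplus> x) \<oplus> y = x \<oplus> (x \<oplus> y)"
    using mor_add_assoc[OF x x y(1)] .
  then show ?thesis
    using assms y mor_add_zero_right[OF x] by simp
qed

lemma cmp_zer:
  assumes h: "h \<in> hom B D" and A: "A \<in> Ob C"
  shows "h \<cdot> \<zero>\<^bsub>A,B\<^esub> = \<zero>\<^bsub>A,D\<^esub>"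
proof -
  have z: "\<zero>\<^bsub>A,B\<^esub> \<in> hom A B" using zer_hom A hom_ob[OF h] by blast
  have "h \<cdot> \<zero>\<^bsub>A,B\<^esub> \<oplus> h \<cdot> \<zero>\<^bsub>A,B\<^esub> = h \<cdot> \<zero>\<^bsub>A,B\<^esub>"
    using cmp_add_distrib_left[OF z z h] mor_add_zero_right[OF z] by simp
  then show ?thesis using zero_if_add_idem cmp_hom[OF z h] by blast
qed

lemma zer_cmp:
  assumes f: "f \<in> hom A B" and D: "D \<in> Ob C"
  shows "\<zero>\<^bsub>B,D\<^esub> \<cdot> f = \<zero>\<^bsub>A,D\<^esub>"
proof -
  have z: "\<zero>\<^bsub>B,D\<^esub> \<in> hom B D" using zer_hom D hom_ob[OF f] by blast
  have "\<zero>\<^bsub>B,D\<^esub> \<cdot> f \<oplus> \<zero>\<^bsub>B,D\<^esub> \<cdot> f = \<zero>\<^bsub>B,D\<^esub> \<cdot> f"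
    using cmp_add_distrib_right[OF z z f] mor_add_zero_right[OF z] by simp
  then show ?thesis using zero_if_add_idem cmp_hom[OF f z] by blast
qed

lemma comm_square_cmp:
  assumes "a \<in> hom A B" "b \<in> hom B D" "c \<in> hom A A'" "d \<in> hom A' D" "b \<cdot> a = d \<cdot> c"
    and "x \<in> hom X A"
  shows "b \<cdot> (a \<cdot> x) = d \<cdot> (c \<cdot> x)"
  using assms cmp_assoc[of x X A a B b D] cmp_assoc[of x X A c A' d D] by simp

lemma left_cancel_if_trivial_kernel:
  assumes w: "w \<in> hom Y L"
    and triv: "\<And>X x. x \<in> hom X Y \<Longrightarrow> w \<cdot> x = \<zero>\<^bsub>X,L\<^esub> \<Longrightarrow> x = \<zero>\<^bsub>X,Y\<^esub>"
    and x: "x \<in> hom X Y" and x': "x' \<in> hom X Y" and eq: "w \<cdot> x = w \<cdot> x'"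
  shows "x = x'"
proof -
  obtain n where n: "n \<in> hom X Y" "x' \<oplus> n = \<zero>\<^bsub>X,Y\<^esub>"
    using mor_add_inverse[OF x'] by blast
  have X: "X \<in> Ob C" using hom_ob[OF x] by blast
  have "w \<cdot> (x \<oplus> n) = w \<cdot> (x' \<oplus> n)"
    using cmp_add_distrib_left[OF x n(1) w] cmp_add_distrib_left[OF x' n(1) w] eq by simp
  also have "\<dots> = \<zero>\<^bsub>X,L\<^esub>"
    using n(2) cmp_zer[OF w X] by simp
  finally have xn: "x \<oplus> n = \<zero>\<^bsub>X,Y\<^esub>"
    using triv add_hom[OF x n(1)] by blast
  have "x = (x \<oplus> n) \<oplus> x'"
    using mor_add_assoc[OF x n(1) x'] mor_add_commute[OF n(1) x'] n(2) mor_add_zero_right[OF x]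
    by simp
  also have "\<dots> = x'"
    using xn mor_add_zero_left[OF x'] by simp
  finally show ?thesis .
qed

lemma is_kernelI:
  assumes "i \<in> hom K B" "p \<in> hom B D" "p \<cdot> i = \<zero>\<^bsub>K,D\<^esub>"
    and "\<And>X h. h \<in> hom X B \<Longrightarrow> p \<cdot> h = \<zero>\<^bsub>X,D\<^esub> \<Longrightarrow> \<exists>u\<in>hom X K. i \<cdot> u = h"
    and "\<And>X u u'. u \<in> hom X K \<Longrightarrow> u' \<in> hom X K \<Longrightarrow> i \<cdot> u = i \<cdot> u' \<Longrightarrow> u = u'"
  shows "is_kernel C K B D i p"
  using assms unfolding is_kernel_def by metis

lemma is_cokernelI:
  assumes "i \<in> hom K B" "p \<in> hom B D" "p \<cdot> i = \<zero>\<^bsub>K,D\<^esub>"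
    and "\<And>X h. h \<in> hom B X \<Longrightarrow> h \<cdot> i = \<zero>\<^bsub>K,X\<^esub> \<Longrightarrow> \<exists>u\<in>hom D X. u \<cdot> p = h"
    and "\<And>X u u'. u \<in> hom D X \<Longrightarrow> u' \<in> hom D X \<Longrightarrow> u \<cdot> p = u' \<cdot> p \<Longrightarrow> u = u'"
  shows "is_cokernel C K B D i p"
  using assms unfolding is_cokernel_def by metis

lemma kernel_factor:
  assumes "is_kernel C K B D i p" "h \<in> hom X B" "p \<cdot> h = \<zero>\<^bsub>X,D\<^esub>"
  shows "\<exists>u\<in>hom X K. i \<cdot> u = h"
  using assms hom_ob unfolding is_kernel_def by blast

lemma kernel_cancel:
  assumes k: "is_kernel C K B D i p" and u: "u \<in> hom X K" and u': "u' \<in> hom X K"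
    and eq: "i \<cdot> u = i \<cdot> u'"
  shows "u = u'"
proof -
  have i: "i \<in> hom K B" and p: "p \<in> hom B D" and pi: "p \<cdot> i = \<zero>\<^bsub>K,D\<^esub>"
    using k unfolding is_kernel_def by auto
  have "p \<cdot> (i \<cdot> u) = \<zero>\<^bsub>X,D\<^esub>"
    using cmp_assoc[OF u i p] pi zer_cmp[OF u] hom_ob[OF p] by simp
  then show ?thesis
    using k u u' eq cmp_hom[OF u i] hom_ob[OF u] unfolding is_kernel_def by metis
qed

lemma cokernel_factor:
  assumes "is_cokernel C K B D i p" "h \<in> hom B X" "h \<cdot> i = \<zero>\<^bsub>K,X\<^esub>"
  shows "\<exists>u\<in>hom D X. u \<cdot> p = h"
  using assms hom_ob unfolding is_cokernel_def by blast

lemma cokernel_cancel: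
  assumes k: "is_cokernel C K B D i p" and u: "u \<in> hom D X" and u': "u' \<in> hom D X"
    and eq: "u \<cdot> p = u' \<cdot> p"
  shows "u = u'"
proof -
  have i: "i \<in> hom K B" and p: "p \<in> hom B D" and pi: "p \<cdot> i = \<zero>\<^bsub>K,D\<^esub>"
    using k unfolding is_cokernel_def by auto
  have "(u \<cdot> p) \<cdot> i = \<zero>\<^bsub>K,X\<^esub>"
    using cmp_assoc[OF i p u] pi cmp_zer[OF u] hom_ob[OF i] by simp
  then show ?thesis
    using k u u' eq cmp_hom[OF p u] hom_ob[OF u] unfolding is_cokernel_def by metis
qed

lemma kernel_unique_iso:
  assumes k: "is_kernel C K B D i p" and k': "is_kernel C K' B D i' p"
  shows "\<exists>a. is_iso C K' K a \<and> i \<cdot> a = i'"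
proof -
  have i: "i \<in> hom K B" and i': "i' \<in> hom K' B"
    and pi: "p \<cdot> i = \<zero>\<^bsub>K,D\<^esub>" and pi': "p \<cdot> i' = \<zero>\<^bsub>K',D\<^esub>"
    using k k' unfolding is_kernel_def by auto
  obtain a where a: "a \<in> hom K' K" "i \<cdot> a = i'" using kernel_factor[OF k i' pi'] by blast
  obtain b where b: "b \<in> hom K K'" "i' \<cdot> b = i" using kernel_factor[OF k' i pi] by blast
  have "i \<cdot> (a \<cdot> b) = i \<cdot> \<one>\<^bsub>K\<^esub>"
    using cmp_assoc[OF b(1) a(1) i] a(2) b(2) cmp_id_right[OF i] by simp
  then have ab: "a \<cdot> b = \<one>\<^bsub>K\<^esub>"
    using kernel_cancel[OF k cmp_hom[OF b(1) a(1)] id_hom] hom_ob[OF i] by blast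
  have "i' \<cdot> (b \<cdot> a) = i' \<cdot> \<one>\<^bsub>K'\<^esub>"
    using cmp_assoc[OF a(1) b(1) i'] a(2) b(2) cmp_id_right[OF i'] by simp
  then have ba: "b \<cdot> a = \<one>\<^bsub>K'\<^esub>"
    using kernel_cancel[OF k' cmp_hom[OF a(1) b(1)] id_hom] hom_ob[OF i'] by blast
  show ?thesis
    unfolding is_iso_def using a b ab ba by blast
qed

lemma cokernel_unique_iso:
  assumes k: "is_cokernel C K B D i p" and k': "is_cokernel C K B D' i p'"
  shows "\<exists>d. is_iso C D' D d \<and> d \<cdot> p' = p"
proof -
  have p: "p \<in> hom B D" and p': "p' \<in> hom B D'"
    and pi: "p \<cdot> i = \<zero>\<^bsub>K,D\<^esub>" and pi': "p' \<cdot> i = \<zero>\<^bsub>K,D'\<^esub>"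
    using k k' unfolding is_cokernel_def by auto
  obtain d where d: "d \<in> hom D' D" "d \<cdot> p' = p" using cokernel_factor[OF k' p pi] by blast
  obtain e where e: "e \<in> hom D D'" "e \<cdot> p = p'" using cokernel_factor[OF k p' pi'] by blast
  have "(d \<cdot> e) \<cdot> p = \<one>\<^bsub>D\<^esub> \<cdot> p"
    using cmp_assoc[OF p e(1) d(1)] d(2) e(2) cmp_id_left[OF p] by simp
  then have de: "d \<cdot> e = \<one>\<^bsub>D\<^esub>"
    using cokernel_cancel[OF k cmp_hom[OF e(1) d(1)] id_hom] hom_ob[OF p] by blast
  have "(e \<cdot> d) \<cdot> p' = \<one>\<^bsub>D'\<^esub> \<cdot> p'"
    using cmp_assoc[OF p' d(1) e(1)] d(2) e(2) cmp_id_left[OF p'] by simp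
  then have ed: "e \<cdot> d = \<one>\<^bsub>D'\<^esub>"
    using cokernel_cancel[OF k' cmp_hom[OF d(1) e(1)] id_hom] hom_ob[OF p'] by blast
  show ?thesis
    unfolding is_iso_def using d e de ed by blast
qed

lemma pullback_factor:
  assumes "is_pullback C B D D' B' p h p' h'" "u \<in> hom X D'" "v \<in> hom X B" "h \<cdot> u = p \<cdot> v"
  shows "\<exists>w\<in>hom X B'. p' \<cdot> w = u \<and> h' \<cdot> w = v"
  using assms hom_ob unfolding is_pullback_def by metis

lemma pullback_cancel:
  assumes pb: "is_pullback C B D D' B' p h p' h'" and w: "w \<in> hom X B'" and w': "w' \<in> hom X B'"
    and "p' \<cdot> w = p' \<cdot> w'" "h' \<cdot> w = h' \<cdot> w'"
  shows "w = w'"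
proof -
  have p': "p' \<in> hom B' D'" and h': "h' \<in> hom B' B" and sq: "p \<cdot> h' = h \<cdot> p'"
    and "p \<in> hom B D" "h \<in> hom D' D"
    using pb unfolding is_pullback_def by auto
  then have "h \<cdot> (p' \<cdot> w) = p \<cdot> (h' \<cdot> w)"
    using comm_square_cmp[OF h' _ p' _ sq w] by simp
  then show ?thesis
    using pb assms(4,5) w w' cmp_hom[OF w p'] cmp_hom[OF w h'] hom_ob[OF w]
    unfolding is_pullback_def by metis
qed

lemma pushout_factor:
  assumes "is_pushout C A B A' B' i f i' f'" "u \<in> hom A' X" "v \<in> hom B X" "u \<cdot> f = v \<cdot> i"
  shows "\<exists>w\<in>hom B' X. w \<cdot> i' = u \<and> w \<cdot> f' = v"
  using assms hom_ob unfolding is_pushout_def by metis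

lemma pushout_cancel:
  assumes po: "is_pushout C A B A' B' i f i' f'" and w: "w \<in> hom B' X" and w': "w' \<in> hom B' X"
    and "w \<cdot> i' = w' \<cdot> i'" "w \<cdot> f' = w' \<cdot> f'"
  shows "w = w'"
proof -
  have i': "i' \<in> hom A' B'" and f': "f' \<in> hom B B'" and sq: "i' \<cdot> f = f' \<cdot> i"
    and i: "i \<in> hom A B" and f: "f \<in> hom A A'"
    using po unfolding is_pushout_def by auto
  have "(w \<cdot> i') \<cdot> f = (w \<cdot> f') \<cdot> i"
    using cmp_assoc[OF f i' w] cmp_assoc[OF i f' w] sq by simp
  then show ?thesis
    using po assms(4,5) w w' cmp_hom[OF i' w] cmp_hom[OF f' w] hom_ob[OF w]
    unfolding is_pushout_def by metis
qed

lemma pullback_kernel: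
  assumes pb: "is_pullback C L M A X g h p' h'" and k: "is_kernel C K L M f g"
  shows "\<exists>i'. is_kernel C K X A i' p' \<and> h' \<cdot> i' = f"
proof -
  have g: "g \<in> hom L M" and h: "h \<in> hom A M" and p': "p' \<in> hom X A" and h': "h' \<in> hom X L"
    and sq: "g \<cdot> h' = h \<cdot> p'"
    using pb unfolding is_pullback_def by auto
  have f: "f \<in> hom K L" and gf: "g \<cdot> f = \<zero>\<^bsub>K,M\<^esub>"
    using k unfolding is_kernel_def by auto
  have K: "K \<in> Ob C" and A: "A \<in> Ob C" using hom_ob[OF f] hom_ob[OF h] by auto
  obtain i' where i': "i' \<in> hom K X" "p' \<cdot> i' = \<zero>\<^bsub>K,A\<^esub>" "h' \<cdot> i' = f"
    using pullback_factor[OF pb zer_hom[OF K A] f] cmp_zer[OF h K] gf by auto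
  have "is_kernel C K X A i' p'"
  proof (rule is_kernelI[OF i'(1) p' i'(2)])
    fix T x assume x: "x \<in> hom T X" and px: "p' \<cdot> x = \<zero>\<^bsub>T,A\<^esub>"
    have "g \<cdot> (h' \<cdot> x) = \<zero>\<^bsub>T,M\<^esub>"
      using cmp_assoc[OF x h' g] cmp_assoc[OF x p' h] sq px cmp_zer[OF h] hom_ob[OF x] by simp
    then obtain u where u: "u \<in> hom T K" "f \<cdot> u = h' \<cdot> x"
      using kernel_factor[OF k cmp_hom[OF x h']] by blast
    have "p' \<cdot> (i' \<cdot> u) = p' \<cdot> x"
      using cmp_assoc[OF u(1) i'(1) p'] i'(2) zer_cmp[OF u(1) A] px by simp
    moreover have "h' \<cdot> (i' \<cdot> u) = h' \<cdot> x"
      using cmp_assoc[OF u(1) i'(1) h'] i'(3) u(2) by simp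
    ultimately show "\<exists>u\<in>hom T K. i' \<cdot> u = x"
      using pullback_cancel[OF pb cmp_hom[OF u(1) i'(1)] x] u(1) by blast
  next
    fix T u u' assume u: "u \<in> hom T K" and u': "u' \<in> hom T K" and eq: "i' \<cdot> u = i' \<cdot> u'"
    have "f \<cdot> u = f \<cdot> u'"
      using cmp_assoc[OF u i'(1) h'] cmp_assoc[OF u' i'(1) h'] i'(3) eq by simp
    then show "u = u'" using kernel_cancel[OF k u u'] by blast
  qed
  then show ?thesis using i'(3) by blast
qed

lemma pushout_cokernel:
  assumes po: "is_pushout C N A K Y n \<kappa> i' f'" and k: "is_cokernel C N A M n q"
  shows "\<exists>c. is_cokernel C K Y M i' c \<and> c \<cdot> f' = q"
proof -
  have n: "n \<in> hom N A" and \<kappa>: "\<kappa> \<in> hom N K" and i': "i' \<in> hom K Y" and f': "f' \<in> hom A Y"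
    and sq: "i' \<cdot> \<kappa> = f' \<cdot> n"
    using po unfolding is_pushout_def by auto
  have q: "q \<in> hom A M" and qn: "q \<cdot> n = \<zero>\<^bsub>N,M\<^esub>"
    using k unfolding is_cokernel_def by auto
  have K: "K \<in> Ob C" and M: "M \<in> Ob C" using hom_ob[OF i'] hom_ob[OF q] by auto
  obtain c where c: "c \<in> hom Y M" "c \<cdot> i' = \<zero>\<^bsub>K,M\<^esub>" "c \<cdot> f' = q"
    using pushout_factor[OF po zer_hom[OF K M] q] zer_cmp[OF \<kappa> M] qn by auto
  have "is_cokernel C K Y M i' c"
  proof (rule is_cokernelI[OF i' c(1) c(2)])
    fix T y assume y: "y \<in> hom Y T" and yi: "y \<cdot> i' = \<zero>\<^bsub>K,T\<^esub>"
    have "(y \<cdot> f') \<cdot> n = \<zero>\<^bsub>N,T\<^esub>"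
      using cmp_assoc[OF n f' y] cmp_assoc[OF \<kappa> i' y] sq yi zer_cmp[OF \<kappa>] hom_ob[OF y] by simp
    then obtain u where u: "u \<in> hom M T" "u \<cdot> q = y \<cdot> f'"
      using cokernel_factor[OF k cmp_hom[OF f' y]] by blast
    have "(u \<cdot> c) \<cdot> i' = y \<cdot> i'"
      using cmp_assoc[OF i' c(1) u(1)] c(2) cmp_zer[OF u(1) K] yi by simp
    moreover have "(u \<cdot> c) \<cdot> f' = y \<cdot> f'"
      using cmp_assoc[OF f' c(1) u(1)] c(3) u(2) by simp
    ultimately show "\<exists>u\<in>hom M T. u \<cdot> c = y"
      using pushout_cancel[OF po cmp_hom[OF c(1) u(1)] y] u(1) by blast
  next
    fix T u u' assume u: "u \<in> hom M T" and u': "u' \<in> hom M T" and eq: "u \<cdot> c = u' \<cdot> c"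
    have "u \<cdot> q = u' \<cdot> q"
      using cmp_assoc[OF f' c(1) u] cmp_assoc[OF f' c(1) u'] c(3) eq by simp
    then show "u = u'" using cokernel_cancel[OF k u u'] by blast
  qed
  then show ?thesis using c(3) by blast
qed

lemma conflation_ob: "E A B D i p \<Longrightarrow> A \<in> Ob C \<and> B \<in> Ob C \<and> D \<in> Ob C"
  using exact unfolding exact_category_def by simp

lemma conflation_kernel: "E A B D i p \<Longrightarrow> is_kernel C A B D i p"
  using exact unfolding exact_category_def kernel_cokernel_pair_def by simp

lemma conflation_cokernel: "E A B D i p \<Longrightarrow> is_cokernel C A B D i p"
  using exact unfolding exact_category_def kernel_cokernel_pair_def by simp

lemma conflation_hom: "E A B D i p \<Longrightarrow> i \<in> hom A B \<and> p \<in> hom B D"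
  using conflation_kernel unfolding is_kernel_def by blast

lemma conflation_iso:
  assumes "E A B D i p" "is_iso C A' A a" "is_iso C B' B b" "is_iso C D' D d"
    "i' \<in> hom A' B'" "p' \<in> hom B' D'" "b \<cdot> i' = i \<cdot> a" "d \<cdot> p' = p \<cdot> b"
  shows "E A' B' D' i' p'"
  using exact assms unfolding exact_category_def by (elim conjE) blast

lemma adm_mono_pushout:
  "adm_mono E A B i \<Longrightarrow> f \<in> hom A A' \<Longrightarrow>
     \<exists>B' i' f'. is_pushout C A B A' B' i f i' f' \<and> adm_mono E A' B' i'"
  using exact unfolding exact_category_def by meson

lemma adm_epi_pullback:
  "adm_epi E B D p \<Longrightarrow> h \<in> hom D' D \<Longrightarrow>
     \<exists>B' p' h'. is_pullback C B D D' B' p h p' h' \<and> adm_epi E B' D' p'"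
  using exact unfolding exact_category_def by meson

lemma iso_id: "A \<in> Ob C \<Longrightarrow> is_iso C A A \<one>\<^bsub>A\<^esub>"
  unfolding is_iso_def using id_hom cmp_id_left by blast

lemma conflation_replace_kernel:
  assumes e: "E K' X A k p" and ker: "is_kernel C K X A i p"
  shows "E K X A i p"
proof -
  obtain a where a: "is_iso C K K' a" "k \<cdot> a = i"
    using kernel_unique_iso[OF conflation_kernel[OF e] ker] by blast
  have i: "i \<in> hom K X" and p: "p \<in> hom X A" using ker unfolding is_kernel_def by auto
  show ?thesis
    using conflation_iso[OF e a(1) iso_id iso_id i p] a(2) cmp_id_left[OF i] cmp_id_left[OF p]
      cmp_id_right[OF p] hom_ob[OF p] by simp
qed

lemma conflation_replace_cokernel:
  assumes e: "E K Y Z i c'" and coker: "is_cokernel C K Y M i c"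
  shows "E K Y M i c"
proof -
  obtain d where d: "is_iso C M Z d" "d \<cdot> c = c'"
    using cokernel_unique_iso[OF conflation_cokernel[OF e] coker] by blast
  have i: "i \<in> hom K Y" and c: "c \<in> hom Y M" using coker unfolding is_cokernel_def by auto
  have c': "c' \<in> hom Y Z" using conflation_hom[OF e] by blast
  show ?thesis
    using conflation_iso[OF e iso_id iso_id d(1) i c] d(2) cmp_id_left[OF i] cmp_id_right[OF i]
      cmp_id_right[OF c'] hom_ob[OF i] by simp
qed

lemma conflation_pullback:
  assumes e: "E K L M f g" and h: "h \<in> hom A M"
  shows "\<exists>X i' p' h'. E K X A i' p' \<and> is_pullback C L M A X g h p' h' \<and> h' \<cdot> i' = f"
proof -
  obtain X p' h' where pb: "is_pullback C L M A X g h p' h'" and "adm_epi E X A p'"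
    using adm_epi_pullback[OF _ h] e unfolding adm_epi_def by blast
  then obtain K' k where e': "E K' X A k p'" unfolding adm_epi_def by blast
  obtain i' where "is_kernel C K X A i' p'" "h' \<cdot> i' = f"
    using pullback_kernel[OF pb conflation_kernel[OF e]] by blast
  then show ?thesis using conflation_replace_kernel[OF e'] pb by blast
qed

lemma conflation_pushout:
  assumes e: "E N A M n q" and \<kappa>: "\<kappa> \<in> hom N K"
  shows "\<exists>Y i' f' c. E K Y M i' c \<and> is_pushout C N A K Y n \<kappa> i' f' \<and> c \<cdot> f' = q"
proof -
  obtain Y i' f' where po: "is_pushout C N A K Y n \<kappa> i' f'" and "adm_mono E K Y i'"
    using adm_mono_pushout[OF _ \<kappa>] e unfolding adm_mono_def by blast
  then obtain Z c' where e': "E K Y Z i' c'" unfolding adm_mono_def by blast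
  obtain c where "is_cokernel C K Y M i' c" "c \<cdot> f' = q"
    using pushout_cokernel[OF po conflation_cokernel[OF e]] by blast
  then show ?thesis using conflation_replace_cokernel[OF e'] po by blast
qed

lemma retraction_if_section:
  assumes e: "E K X A i p" and s: "s \<in> hom A X" and ps: "p \<cdot> s = \<one>\<^bsub>A\<^esub>"
  shows "\<exists>r\<in>hom X K. r \<cdot> i = \<one>\<^bsub>K\<^esub>"
proof -
  have i: "i \<in> hom K X" and p: "p \<in> hom X A" using conflation_hom[OF e] by auto
  have pi: "p \<cdot> i = \<zero>\<^bsub>K,A\<^esub>" using conflation_kernel[OF e] unfolding is_kernel_def by blast
  have K: "K \<in> Ob C" and X: "X \<in> Ob C" using conflation_ob[OF e] by auto
  have sp: "s \<cdot> p \<in> hom X X" using cmp_hom[OF p s] .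
  obtain n where n: "n \<in> hom X X" "s \<cdot> p \<oplus> n = \<zero>\<^bsub>X,X\<^esub>" using mor_add_inverse[OF sp] by blast
  define t where "t = \<one>\<^bsub>X\<^esub> \<oplus> n"
  have t: "t \<in> hom X X" unfolding t_def using add_hom[OF id_hom[OF X] n(1)] .
  \<comment> \<open>t is the idempotent 1 - s p, which is killed by p and fixes i\<close>
  have "p \<cdot> t = p \<cdot> (s \<cdot> p) \<oplus> p \<cdot> n"
    unfolding t_def using cmp_add_distrib_left[OF id_hom[OF X] n(1) p] cmp_id_right[OF p]
      cmp_assoc[OF p s p] ps cmp_id_left[OF p] by simp
  also have "\<dots> = \<zero>\<^bsub>X,A\<^esub>"
    using cmp_add_distrib_left[OF sp n(1) p] n(2) cmp_zer[OF p X] by simp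
  finally obtain r where r: "r \<in> hom X K" "i \<cdot> r = t"
    using kernel_factor[OF conflation_kernel[OF e] t] by blast
  have "(s \<cdot> p) \<cdot> i \<oplus> n \<cdot> i = \<zero>\<^bsub>K,X\<^esub>"
    using cmp_add_distrib_right[OF sp n(1) i] n(2) zer_cmp[OF i X] by simp
  then have ni: "n \<cdot> i = \<zero>\<^bsub>K,X\<^esub>"
    using cmp_assoc[OF i p s] pi cmp_zer[OF s K] mor_add_zero_left[OF cmp_hom[OF i n(1)]] by simp
  have "i \<cdot> (r \<cdot> i) = i \<cdot> \<one>\<^bsub>K\<^esub>"
    using cmp_assoc[OF i r(1) i] r(2) cmp_add_distrib_right[OF id_hom[OF X] n(1) i] t_def ni
      cmp_id_left[OF i] mor_add_zero_right[OF i] cmp_id_right[OF i] by simp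
  then show ?thesis
    using kernel_cancel[OF conflation_kernel[OF e] cmp_hom[OF i r(1)] id_hom[OF K]] r(1) by blast
qed

lemma section_if_retraction:
  assumes e: "E K X A i p" and r: "r \<in> hom X K" and ri: "r \<cdot> i = \<one>\<^bsub>K\<^esub>"
  shows "\<exists>s\<in>hom A X. p \<cdot> s = \<one>\<^bsub>A\<^esub>"
proof -
  have i: "i \<in> hom K X" and p: "p \<in> hom X A" using conflation_hom[OF e] by auto
  have pi: "p \<cdot> i = \<zero>\<^bsub>K,A\<^esub>" using conflation_kernel[OF e] unfolding is_kernel_def by blast
  have A: "A \<in> Ob C" and X: "X \<in> Ob C" using conflation_ob[OF e] by auto
  have ir: "i \<cdot> r \<in> hom X X" using cmp_hom[OF r i] .
  obtain n where n: "n \<in> hom X X" "i \<cdot> r \<oplus> n = \<zero>\<^bsub>X,X\<^esub>" using mor_add_inverse[OF ir] by blast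
  define t where "t = \<one>\<^bsub>X\<^esub> \<oplus> n"
  have t: "t \<in> hom X X" unfolding t_def using add_hom[OF id_hom[OF X] n(1)] .
  \<comment> \<open>t is the idempotent 1 - i r, which kills i and is fixed by p\<close>
  have "t \<cdot> i = (i \<cdot> r) \<cdot> i \<oplus> n \<cdot> i"
    unfolding t_def using cmp_add_distrib_right[OF id_hom[OF X] n(1) i] cmp_id_left[OF i]
      cmp_assoc[OF i r i] ri cmp_id_right[OF i] by simp
  also have "\<dots> = \<zero>\<^bsub>K,X\<^esub>"
    using cmp_add_distrib_right[OF ir n(1) i] n(2) zer_cmp[OF i X] by simp
  finally obtain s where s: "s \<in> hom A X" "s \<cdot> p = t"
    using cokernel_factor[OF conflation_cokernel[OF e] t] by blast
  have "p \<cdot> (i \<cdot> r) \<oplus> p \<cdot> n = \<zero>\<^bsub>X,A\<^esub>"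
    using cmp_add_distrib_left[OF ir n(1) p] n(2) cmp_zer[OF p X] by simp
  then have pn: "p \<cdot> n = \<zero>\<^bsub>X,A\<^esub>"
    using cmp_assoc[OF r i p] pi zer_cmp[OF r A] mor_add_zero_left[OF cmp_hom[OF n(1) p]] by simp
  have "(p \<cdot> s) \<cdot> p = \<one>\<^bsub>A\<^esub> \<cdot> p"
    using cmp_assoc[OF p s(1) p] s(2) cmp_add_distrib_left[OF id_hom[OF X] n(1) p] t_def pn
      cmp_id_right[OF p] mor_add_zero_right[OF p] cmp_id_left[OF p] by simp
  then show ?thesis
    using cokernel_cancel[OF conflation_cokernel[OF e] cmp_hom[OF s(1) p] id_hom[OF A]] s(1) by blast
qed

definition split_extension :: "'o \<Rightarrow> 'o \<Rightarrow> 'o \<times> 'm \<times> 'm \<Rightarrow> bool" where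
  "split_extension A K = (\<lambda>(X, i, p). E K X A i p \<and> (\<exists>s\<in>hom A X. p \<cdot> s = \<one>\<^bsub>A\<^esub>))"

lemma split_extension_yoneda_rel:
  assumes "(x, y) \<in> yoneda_rel C E A K"
  shows "split_extension A K x \<longleftrightarrow> split_extension A K y"
proof -
  obtain X i p Y j q \<phi> where xy: "x = (X, i, p)" "y = (Y, j, q)"
    and ex: "E K X A i p" and ey: "E K Y A j q"
    and \<phi>: "\<phi> \<in> hom X Y" "\<phi> \<cdot> i = j" "q \<cdot> \<phi> = p"
    using assms unfolding yoneda_rel_def by blast
  have i: "i \<in> hom K X" and q: "q \<in> hom Y A" using conflation_hom ex ey by blast+
  have "\<exists>s'\<in>hom A Y. q \<cdot> s' = \<one>\<^bsub>A\<^esub>" if s: "s \<in> hom A X" "p \<cdot> s = \<one>\<^bsub>A\<^esub>" for s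
    using cmp_hom[OF s(1) \<phi>(1)] cmp_assoc[OF s(1) \<phi>(1) q] \<phi>(3) s(2) by auto
  moreover have "\<exists>s\<in>hom A X. p \<cdot> s = \<one>\<^bsub>A\<^esub>" if s': "s' \<in> hom A Y" "q \<cdot> s' = \<one>\<^bsub>A\<^esub>" for s'
  proof -
    obtain r where r: "r \<in> hom Y K" "r \<cdot> j = \<one>\<^bsub>K\<^esub>" using retraction_if_section[OF ey s'] by blast
    have "(r \<cdot> \<phi>) \<cdot> i = \<one>\<^bsub>K\<^esub>" using cmp_assoc[OF i \<phi>(1) r(1)] \<phi>(2) r(2) by simp
    then show ?thesis using section_if_retraction[OF ex cmp_hom[OF \<phi>(1) r(1)]] by blast
  qed
  ultimately show ?thesis
    unfolding xy split_extension_def using ex ey by auto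
qed

lemma split_extension_yoneda_equiv:
  assumes "(x, y) \<in> (yoneda_rel C E A K \<union> (yoneda_rel C E A K)\<inverse>)\<^sup>*" and "split_extension A K x"
  shows "split_extension A K y"
  using assms by induction (auto simp: split_extension_yoneda_rel)

lemma split_extension_exists:
  assumes e: "E K X A i p"
  shows "\<exists>x. split_extension A K x"
proof -
  have p: "p \<in> hom X A" and A: "A \<in> Ob C" and X: "X \<in> Ob C"
    using conflation_hom[OF e] conflation_ob[OF e] by auto
  \<comment> \<open>the pullback of any extension along the zero map splits\<close>
  obtain X' i' p' h' where e': "E K X' A i' p'" and pb: "is_pullback C X A A X' p \<zero>\<^bsub>A,A\<^esub> p' h'"
    using conflation_pullback[OF e zer_hom[OF A A]] by blast
  have "\<zero>\<^bsub>A,A\<^esub> \<cdot> \<one>\<^bsub>A\<^esub> = p \<cdot> \<zero>\<^bsub>A,X\<^esub>"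
    using zer_cmp[OF id_hom[OF A] A] cmp_zer[OF p A] by simp
  then obtain s where "s \<in> hom A X'" "p' \<cdot> s = \<one>\<^bsub>A\<^esub>"
    using pullback_factor[OF pb id_hom[OF A] zer_hom[OF A X]] by blast
  then show ?thesis
    unfolding split_extension_def using e' by auto
qed

lemma Ext1_zero_section:
  assumes z: "Ext1_zero C E A K" and e: "E K X A i p"
  shows "\<exists>s\<in>hom A X. p \<cdot> s = \<one>\<^bsub>A\<^esub>"
proof -
  let ?R = "(yoneda_rel C E A K \<union> (yoneda_rel C E A K)\<inverse>)\<^sup>*"
  obtain x0 where x0: "split_extension A K x0" using split_extension_exists[OF e] by blast
  have x0_ext: "x0 \<in> {(X, i, p). E K X A i p}" using x0 unfolding split_extension_def by auto
  have x_ext: "(X, i, p) \<in> {(X, i, p). E K X A i p}" using e by simp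
  have "?R `` {x0} = ?R `` {(X, i, p)}"
    using z quotientI[OF x0_ext, of ?R] quotientI[OF x_ext, of ?R]
    unfolding Ext1_zero_def Ext1_def is_singleton_def by auto
  then have "(x0, (X, i, p)) \<in> ?R" by blast
  then show ?thesis
    using split_extension_yoneda_equiv x0 unfolding split_extension_def by fastforce
qed

lemma Ext1_zero_lift:
  assumes z: "Ext1_zero C E A K" and e: "E K L M f g" and h: "h \<in> hom A M"
  shows "\<exists>l\<in>hom A L. g \<cdot> l = h"
proof -
  obtain X i' p' h' where e': "E K X A i' p'" and pb: "is_pullback C L M A X g h p' h'"
    using conflation_pullback[OF e h] by blast
  obtain s where s: "s \<in> hom A X" "p' \<cdot> s = \<one>\<^bsub>A\<^esub>" using Ext1_zero_section[OF z e'] by blast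
  have p': "p' \<in> hom X A" and h': "h' \<in> hom X L" and g: "g \<in> hom L M" and sq: "g \<cdot> h' = h \<cdot> p'"
    using pb unfolding is_pullback_def by auto
  have "g \<cdot> (h' \<cdot> s) = h"
    using comm_square_cmp[OF h' g p' h sq s(1)] s(2) cmp_id_right[OF h] by simp
  then show ?thesis using cmp_hom[OF s(1) h'] by blast
qed

context
  fixes K Y L M i c F G w
  assumes e: "E K Y M i c" and ker: "is_kernel C K L M F G"
    and w: "w \<in> hom Y L" and wi: "w \<cdot> i = F" and Gw: "G \<cdot> w = c"
begin

lemma comparison_left_cancel:
  assumes "x \<in> hom X Y" "x' \<in> hom X Y" "w \<cdot> x = w \<cdot> x'"
  shows "x = x'"
proof (rule left_cancel_if_trivial_kernel[OF w _ assms])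
  fix T x assume x: "x \<in> hom T Y" and wx: "w \<cdot> x = \<zero>\<^bsub>T,L\<^esub>"
  have i: "i \<in> hom K Y" and G: "G \<in> hom L M" and T: "T \<in> Ob C" and K: "K \<in> Ob C"
    using conflation_hom[OF e] ker hom_ob[OF x] conflation_ob[OF e] unfolding is_kernel_def by auto
  have "c \<cdot> x = \<zero>\<^bsub>T,M\<^esub>" using cmp_assoc[OF x w G] Gw wx cmp_zer[OF G T] by simp
  then obtain u where u: "u \<in> hom T K" "i \<cdot> u = x"
    using kernel_factor[OF conflation_kernel[OF e] x] by blast
  have "F \<cdot> u = F \<cdot> \<zero>\<^bsub>T,K\<^esub>"
    using cmp_assoc[OF u(1) i w] wi u(2) wx cmp_zer[OF _ T] ker unfolding is_kernel_def by auto
  then have "u = \<zero>\<^bsub>T,K\<^esub>" using kernel_cancel[OF ker u(1) zer_hom[OF T K]] by blast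
  then show "x = \<zero>\<^bsub>T,Y\<^esub>" using u(2) cmp_zer[OF i T] by simp
qed

lemma comparison_right_inverse: "\<exists>v\<in>hom L Y. w \<cdot> v = \<one>\<^bsub>L\<^esub>"
proof -
  have i: "i \<in> hom K Y" using conflation_hom[OF e] by blast
  have F: "F \<in> hom K L" and G: "G \<in> hom L M" using ker unfolding is_kernel_def by auto
  have L: "L \<in> Ob C" using hom_ob[OF F] by blast
  \<comment> \<open>pulling back along G provides a cover p' of L on which w can be inverted\<close>
  obtain P i' p' h' where e': "E K P L i' p'" and pb: "is_pullback C Y M L P c G p' h'"
    and hi': "h' \<cdot> i' = i"
    using conflation_pullback[OF e G] by blast
  have p': "p' \<in> hom P L" and h': "h' \<in> hom P Y" and sq: "c \<cdot> h' = G \<cdot> p'"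
    and i': "i' \<in> hom K P" and P: "P \<in> Ob C"
    using pb conflation_hom[OF e'] conflation_ob[OF e'] unfolding is_pullback_def by auto
  have wh: "w \<cdot> h' \<in> hom P L" using cmp_hom[OF h' w] .
  obtain n where n: "n \<in> hom P L" "w \<cdot> h' \<oplus> n = \<zero>\<^bsub>P,L\<^esub>" using mor_add_inverse[OF wh] by blast
  have "G \<cdot> (p' \<oplus> n) = G \<cdot> (w \<cdot> h' \<oplus> n)"
    using cmp_add_distrib_left[OF p' n(1) G] cmp_add_distrib_left[OF wh n(1) G]
      cmp_assoc[OF h' w G] Gw sq by simp
  also have "\<dots> = \<zero>\<^bsub>P,M\<^esub>" using n(2) cmp_zer[OF G P] by simp
  finally obtain \<rho> where \<rho>: "\<rho> \<in> hom P K" "F \<cdot> \<rho> = p' \<oplus> n"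
    using kernel_factor[OF ker add_hom[OF p' n(1)]] by blast
  define \<phi> where "\<phi> = h' \<oplus> i \<cdot> \<rho>"
  have i\<rho>: "i \<cdot> \<rho> \<in> hom P Y" using cmp_hom[OF \<rho>(1) i] .
  have \<phi>: "\<phi> \<in> hom P Y" unfolding \<phi>_def using add_hom[OF h' i\<rho>] .
  have w\<phi>: "w \<cdot> \<phi> = p'"
    unfolding \<phi>_def using cmp_add_distrib_left[OF h' i\<rho> w] cmp_assoc[OF \<rho>(1) i w] wi \<rho>(2)
      mor_add_assoc[OF wh p' n(1)] mor_add_commute[OF wh p'] mor_add_assoc[OF p' wh n(1)] n(2)
      mor_add_zero_right[OF p'] by simp
  have K: "K \<in> Ob C" and p'i': "p' \<cdot> i' = \<zero>\<^bsub>K,L\<^esub>"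
    using conflation_ob[OF e] conflation_kernel[OF e'] unfolding is_kernel_def by auto
  have "w \<cdot> (\<phi> \<cdot> i') = w \<cdot> \<zero>\<^bsub>K,Y\<^esub>"
    using cmp_assoc[OF i' \<phi> w] w\<phi> p'i' cmp_zer[OF w K] by simp
  then have "\<phi> \<cdot> i' = \<zero>\<^bsub>K,Y\<^esub>"
    using comparison_left_cancel[OF cmp_hom[OF i' \<phi>] zer_hom[OF K]] hom_ob[OF w] by blast
  then obtain v where v: "v \<in> hom L Y" "v \<cdot> p' = \<phi>"
    using cokernel_factor[OF conflation_cokernel[OF e'] \<phi>] by blast
  have "(w \<cdot> v) \<cdot> p' = \<one>\<^bsub>L\<^esub> \<cdot> p'"
    using cmp_assoc[OF p' v(1) w] v(2) w\<phi> cmp_id_left[OF p'] by simp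
  then show ?thesis
    using cokernel_cancel[OF conflation_cokernel[OF e'] cmp_hom[OF v(1) w] id_hom[OF L]] v(1)
    by blast
qed

lemma comparison_iso: "is_iso C Y L w"
proof -
  obtain v where v: "v \<in> hom L Y" "w \<cdot> v = \<one>\<^bsub>L\<^esub>" using comparison_right_inverse by blast
  have "w \<cdot> (v \<cdot> w) = w \<cdot> \<one>\<^bsub>Y\<^esub>"
    using cmp_assoc[OF w v(1) w] v(2) cmp_id_left[OF w] cmp_id_right[OF w] by simp
  then have "v \<cdot> w = \<one>\<^bsub>Y\<^esub>"
    using comparison_left_cancel[OF cmp_hom[OF w v(1)] id_hom] hom_ob[OF w] by blast
  then show ?thesis unfolding is_iso_def using w v by blast
qed

end

lemma conflation_if_kernel_and_adm_epi_factors: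
  assumes ker: "is_kernel C K L M F G" and e: "E N A M n q"
    and l: "l \<in> hom A L" and Gl: "G \<cdot> l = q"
  shows "E K L M F G"
proof -
  have F: "F \<in> hom K L" and G: "G \<in> hom L M" and GF: "G \<cdot> F = \<zero>\<^bsub>K,M\<^esub>"
    using ker unfolding is_kernel_def by auto
  have n: "n \<in> hom N A" and qn: "q \<cdot> n = \<zero>\<^bsub>N,M\<^esub>"
    using conflation_kernel[OF e] unfolding is_kernel_def by auto
  have "G \<cdot> (l \<cdot> n) = \<zero>\<^bsub>N,M\<^esub>" using cmp_assoc[OF n l G] Gl qn by simp
  then obtain \<kappa> where \<kappa>: "\<kappa> \<in> hom N K" "F \<cdot> \<kappa> = l \<cdot> n"
    using kernel_factor[OF ker cmp_hom[OF n l]] by blast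
  obtain Y i' f' c where e': "E K Y M i' c" and po: "is_pushout C N A K Y n \<kappa> i' f'"
    and cf: "c \<cdot> f' = q"
    using conflation_pushout[OF e \<kappa>(1)] by blast
  have i': "i' \<in> hom K Y" and c: "c \<in> hom Y M" and ci: "c \<cdot> i' = \<zero>\<^bsub>K,M\<^esub>"
    using conflation_kernel[OF e'] unfolding is_kernel_def by auto
  obtain w where w: "w \<in> hom Y L" "w \<cdot> i' = F" "w \<cdot> f' = l"
    using pushout_factor[OF po F l \<kappa>(2)] by blast
  have f': "f' \<in> hom A Y" using po unfolding is_pushout_def by blast
  have "(G \<cdot> w) \<cdot> i' = c \<cdot> i'" using cmp_assoc[OF i' w(1) G] w(2) GF ci by simp
  moreover have "(G \<cdot> w) \<cdot> f' = c \<cdot> f'" using cmp_assoc[OF f' w(1) G] w(3) Gl cf by simp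
  ultimately have Gw: "G \<cdot> w = c" using pushout_cancel[OF po cmp_hom[OF w(1) G] c] by blast
  obtain v where v: "v \<in> hom L Y" "v \<cdot> w = \<one>\<^bsub>Y\<^esub>" "w \<cdot> v = \<one>\<^bsub>L\<^esub>"
    using comparison_iso[OF e' ker w(1,2) Gw] unfolding is_iso_def by blast
  have "v \<cdot> F = i'" using cmp_assoc[OF i' w(1) v(1)] w(2) v(2) cmp_id_left[OF i'] by simp
  moreover have "c \<cdot> v = G" using cmp_assoc[OF v(1) w(1) G] Gw v(3) cmp_id_right[OF G] by simp
  moreover have "is_iso C L Y v" unfolding is_iso_def using v w(1) by blast
  ultimately show ?thesis
    using conflation_iso[OF e' iso_id _ iso_id F G] cmp_id_right[OF i'] cmp_id_left[OF G]
      hom_ob[OF F] hom_ob[OF G] by auto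
qed

lemma product_proj: "is_product C I X P pr \<Longrightarrow> j \<in> I \<Longrightarrow> pr j \<in> hom P (X j)"
  unfolding is_product_def by blast

lemma product_univ:
  "is_product C I X P pr \<Longrightarrow> Y \<in> Ob C \<Longrightarrow> \<forall>j\<in>I. f j \<in> hom Y (X j) \<Longrightarrow>
     \<exists>!u. u \<in> hom Y P \<and> (\<forall>j\<in>I. pr j \<cdot> u = f j)"
  unfolding is_product_def by simp

lemma product_factor:
  "is_product C I X P pr \<Longrightarrow> Y \<in> Ob C \<Longrightarrow> \<forall>j\<in>I. f j \<in> hom Y (X j) \<Longrightarrow>
     \<exists>u\<in>hom Y P. \<forall>j\<in>I. pr j \<cdot> u = f j"
  using product_univ by blast

lemma product_cancel:
  assumes P: "is_product C I X P pr" and u: "u \<in> hom Y P" and u': "u' \<in> hom Y P"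
    and eq: "\<forall>j\<in>I. pr j \<cdot> u = pr j \<cdot> u'"
  shows "u = u'"
proof -
  have Y: "Y \<in> Ob C" using hom_ob[OF u] by blast
  have "\<forall>j\<in>I. pr j \<cdot> u \<in> hom Y (X j)" using product_proj[OF P] cmp_hom[OF u] by blast
  then have "\<exists>!v. v \<in> hom Y P \<and> (\<forall>j\<in>I. pr j \<cdot> v = pr j \<cdot> u)"
    by (rule product_univ[OF P Y])
  then show ?thesis using u u' eq by metis
qed

lemma product_kernel:
  assumes ker: "\<forall>j\<in>I. is_kernel C (K j) (L j) (M j) (f j) (g j)"
    and PK: "is_product C I K PK pK" and PL: "is_product C I L PL pL"
    and PM: "is_product C I M PM pM"
    and F: "F \<in> hom PK PL" and FF: "\<forall>j\<in>I. pL j \<cdot> F = f j \<cdot> pK j"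
    and G: "G \<in> hom PL PM" and GG: "\<forall>j\<in>I. pM j \<cdot> G = g j \<cdot> pL j"
  shows "is_kernel C PK PL PM F G"
proof -
  have f: "f j \<in> hom (K j) (L j)" and g: "g j \<in> hom (L j) (M j)"
    and gf: "g j \<cdot> f j = \<zero>\<^bsub>K j,M j\<^esub>" if "j \<in> I" for j
    using ker that unfolding is_kernel_def by auto
  note pK = product_proj[OF PK] and pL = product_proj[OF PL] and pM = product_proj[OF PM]
  have PK_ob: "PK \<in> Ob C" and PM_ob: "PM \<in> Ob C" using hom_ob[OF F] hom_ob[OF G] by auto
  have FFx: "pL j \<cdot> (F \<cdot> x) = f j \<cdot> (pK j \<cdot> x)" if "j \<in> I" "x \<in> hom X PK" for j x X
    using comm_square_cmp[OF F pL pK f] FF that by blast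
  have GGx: "pM j \<cdot> (G \<cdot> x) = g j \<cdot> (pL j \<cdot> x)" if "j \<in> I" "x \<in> hom X PL" for j x X
    using comm_square_cmp[OF G pM pL g] GG that by blast
  show ?thesis
  proof (rule is_kernelI[OF F G])
    have "pM j \<cdot> (G \<cdot> F) = pM j \<cdot> \<zero>\<^bsub>PK,PM\<^esub>" if j: "j \<in> I" for j
      using GGx[OF j F] FF j cmp_assoc[OF pK[OF j] f[OF j] g[OF j]] gf[OF j]
        zer_cmp[OF pK[OF j]] cmp_zer[OF pM[OF j] PK_ob] hom_ob[OF g[OF j]] by simp
    then show "G \<cdot> F = \<zero>\<^bsub>PK,PM\<^esub>"
      using product_cancel[OF PM cmp_hom[OF F G] zer_hom[OF PK_ob PM_ob]] by blast
  next
    fix X t assume t: "t \<in> hom X PL" and Gt: "G \<cdot> t = \<zero>\<^bsub>X,PM\<^esub>"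
    have "\<exists>u\<in>hom X (K j). f j \<cdot> u = pL j \<cdot> t" if j: "j \<in> I" for j
    proof (rule kernel_factor[OF ker[rule_format, OF j] cmp_hom[OF t pL[OF j]]])
      show "g j \<cdot> (pL j \<cdot> t) = \<zero>\<^bsub>X,M j\<^esub>"
        using GGx[OF j t] Gt cmp_zer[OF pM[OF j]] hom_ob[OF t] by simp
    qed
    then obtain u where u: "\<forall>j\<in>I. u j \<in> hom X (K j) \<and> f j \<cdot> u j = pL j \<cdot> t"
      using bchoice[of I "\<lambda>j u. u \<in> hom X (K j) \<and> f j \<cdot> u = pL j \<cdot> t"] by blast
    then obtain \<rho> where \<rho>: "\<rho> \<in> hom X PK" "\<forall>j\<in>I. pK j \<cdot> \<rho> = u j"
      using product_factor[OF PK, of X u] hom_ob[OF t] by blast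
    have "F \<cdot> \<rho> = t"
      using product_cancel[OF PL cmp_hom[OF \<rho>(1) F] t] FFx[OF _ \<rho>(1)] \<rho>(2) u by simp
    then show "\<exists>\<rho>\<in>hom X PK. F \<cdot> \<rho> = t" using \<rho>(1) by blast
  next
    fix X x y assume x: "x \<in> hom X PK" and y: "y \<in> hom X PK" and eq: "F \<cdot> x = F \<cdot> y"
    have "pK j \<cdot> x = pK j \<cdot> y" if j: "j \<in> I" for j
      using kernel_cancel[OF ker[rule_format, OF j] cmp_hom[OF x pK[OF j]] cmp_hom[OF y pK[OF j]]]
        FFx[OF j x] FFx[OF j y] eq by simp
    then show "x = y" using product_cancel[OF PK x y] by blast
  qed
qed

lemma product_lift:
  assumes e: "\<forall>j\<in>I. E (K j) (L j) (M j) (f j) (g j)"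
    and PL: "is_product C I L PL pL" and PM: "is_product C I M PM pM"
    and G: "G \<in> hom PL PM" and GG: "\<forall>j\<in>I. pM j \<cdot> G = g j \<cdot> pL j"
    and q: "q \<in> hom A PM" and z: "\<forall>j\<in>I. Ext1_zero C E A (K j)"
  shows "\<exists>l\<in>hom A PL. G \<cdot> l = q"
proof -
  note pL = product_proj[OF PL] and pM = product_proj[OF PM]
  have g: "g j \<in> hom (L j) (M j)" if "j \<in> I" for j
    using conflation_hom[OF e[rule_format, OF that]] by blast
  have "\<exists>l\<in>hom A (L j). g j \<cdot> l = pM j \<cdot> q" if j: "j \<in> I" for j
    using Ext1_zero_lift[OF z[rule_format, OF j] e[rule_format, OF j] cmp_hom[OF q pM[OF j]]] .
  then obtain lj where lj: "\<forall>j\<in>I. lj j \<in> hom A (L j) \<and> g j \<cdot> lj j = pM j \<cdot> q"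
    using bchoice[of I "\<lambda>j l. l \<in> hom A (L j) \<and> g j \<cdot> l = pM j \<cdot> q"] by blast
  then obtain l where l: "l \<in> hom A PL" "\<forall>j\<in>I. pL j \<cdot> l = lj j"
    using product_factor[OF PL, of A lj] hom_ob[OF q] by blast
  have "pM j \<cdot> (G \<cdot> l) = pM j \<cdot> q" if j: "j \<in> I" for j
    using comm_square_cmp[OF G pM[OF j] pL[OF j] g[OF j] _ l(1)] GG l(2) lj j by simp
  then show ?thesis
    using product_cancel[OF PM cmp_hom[OF l(1) G] q] l(1) by blast
qed

end

theorem lemma8p3:
  fixes C :: "('o, 'm, 'x) acat_scheme" and E :: "('o, 'm) confl"
    and I :: "'i set" and K L M :: "'i \<Rightarrow> 'o" and f g :: "'i \<Rightarrow> 'm"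
  assumes "exact_category C E"
    and "\<forall>i\<in>I. E (K i) (L i) (M i) (f i) (g i)"
    and "is_product C I K PK pK" and "is_product C I L PL pL" and "is_product C I M PM pM"
    and "A \<in> Ob C" and "q \<in> Hom C A PM" and "adm_epi E A PM q"
    and "\<forall>i\<in>I. Ext1_zero C E A (K i)"
    and "F \<in> Hom C PK PL" and "\<forall>i\<in>I. cmp C (pL i) F = cmp C (f i) (pK i)"
    and "G \<in> Hom C PL PM" and "\<forall>i\<in>I. cmp C (pM i) G = cmp C (g i) (pL i)"
  shows "E PK PL PM F G"
proof -
  interpret exact_cat C E by (rule exact_cat.intro) fact
  have "\<forall>i\<in>I. is_kernel C (K i) (L i) (M i) (f i) (g i)"
    using assms(2) conflation_kernel by blast
  then have ker: "is_kernel C PK PL PM F G"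
    by (rule product_kernel[OF _ assms(3-5,10-13)])
  obtain l where l: "l \<in> Hom C A PL" "cmp C G l = q"
    using product_lift[OF assms(2,4,5,12,13,7,9)] by blast
  obtain N n where "E N A PM n q"
    using assms(8) unfolding adm_epi_def by blast
  then show ?thesis
    by (rule conflation_if_kernel_and_adm_epi_factors[OF ker _ l])
qed

end
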